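(* Let $(M,F)$ be a Finsler $m$-manifold with finite uniform constant $\Lambda_F$, and let $d\mu$ be either the Busemann–Hausdorff volume form or the Holmes–Thompson volume form on $M$. Then the distortion $\tau$ of $d\mu$ satisfies $e^{-\tau(y)}\leq\Lambda_F^m$ for all $y\in SM$.
   Context: $g_y$ is the fundamental tensor with components $g_{ij}(x,y)$; $SM=\{(x,y):F(x,y)=1\}$; $\Lambda_F=\sup\{g_X(Y,Y)/g_Z(Y,Y):X,Y,Z\in S_xM,\ x\in M\}$. For $d\mu=\sigma(x)dx^1\wedge\cdots\wedge dx^m$, the distortion is $\tau(y)=\log\big(\sqrt{\det g_{ij}(x,y)}/\sigma(x)\big)$. Busemann–Hausdorff: $\sigma_{BH}(x)=\mathrm{vol}(\mathbb B^m)/\mathrm{vol}\{y\in T_xM:F(x,y)<1\}$; Holmes–Thompson: $\sigma_{HT}(x)=\frac{1}{\mathrm{vol}(\mathbb B^m)}\int_{\{F(x,y)<1\}}\det g_{ij}(x,y)\,dy^1\cdots dy^m$ (Euclidean volumes in the coordinates $y^i$). *)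

theory Defs
  imports "HOL-Analysis.Analysis"
begin

text \<open>Tangent spaces are identified with real^'m via coordinates y^i; m = CARD('m).\<close>

text \<open>C-infinity on a set S: all iterated partial derivatives exist (hence are continuous).\<close>
definition smooth_on_R :: "(real^'m) set \<Rightarrow> (real^'m \<Rightarrow> real) \<Rightarrow> bool" where
  "smooth_on_R S f \<longleftrightarrow>
     (\<exists>D :: 'm list \<Rightarrow> real^'m \<Rightarrow> real. D [] = f \<and>
        (\<forall>ks. \<forall>y\<in>S. (D ks has_derivative (\<lambda>h. \<Sum>i\<in>UNIV. D (i # ks) y * h $ i)) (at y)))"

definition grad_E :: "(real^'m \<Rightarrow> real) \<Rightarrow> real^'m \<Rightarrow> real^'m" where
  "grad_E F y = (\<chi> i. frechet_derivative (\<lambda>z. (F z)^2 / 2) (at y) (axis i 1))"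

definition fund_tensor :: "(real^'m \<Rightarrow> real) \<Rightarrow> real^'m \<Rightarrow> real^'m^'m" where
  "fund_tensor F y = (\<chi> i j. frechet_derivative (\<lambda>z. grad_E F z $ i) (at y) (axis j 1))"

definition minkowski_norm :: "(real^'m \<Rightarrow> real) \<Rightarrow> bool" where
  "minkowski_norm F \<longleftrightarrow>
     smooth_on_R (- {0}) F \<and>
     F 0 = 0 \<and> (\<forall>y. y \<noteq> 0 \<longrightarrow> F y > 0) \<and>
     (\<forall>y (t::real). t > 0 \<longrightarrow> F (t *\<^sub>R y) = t * F y) \<and>
     (\<forall>y. y \<noteq> 0 \<longrightarrow> (\<forall>v. v \<noteq> 0 \<longrightarrow> v \<bullet> (fund_tensor F y *v v) > 0))"

definition finsler :: "('p \<Rightarrow> real^'m \<Rightarrow> real) \<Rightarrow> bool" where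
  "finsler F \<longleftrightarrow> (\<forall>x. minkowski_norm (F x))"

definition uniform_ratios :: "('p \<Rightarrow> real^'m \<Rightarrow> real) \<Rightarrow> real set" where
  "uniform_ratios F =
     {(Y \<bullet> (fund_tensor (F x) X *v Y)) / (Y \<bullet> (fund_tensor (F x) Z *v Y)) | x X Y Z.
        F x X = 1 \<and> F x Y = 1 \<and> F x Z = 1}"

definition uniform_constant :: "('p \<Rightarrow> real^'m \<Rightarrow> real) \<Rightarrow> real" where
  "uniform_constant F = Sup (uniform_ratios F)"

definition sigma_BH :: "('p \<Rightarrow> real^'m \<Rightarrow> real) \<Rightarrow> 'p \<Rightarrow> real" where
  "sigma_BH F x = measure lborel (ball (0::real^'m) 1) / measure lborel {y. F x y < 1}"

definition sigma_HT :: "('p \<Rightarrow> real^'m \<Rightarrow> real) \<Rightarrow> 'p \<Rightarrow> real" where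
  "sigma_HT F x = (1 / measure lborel (ball (0::real^'m) 1)) *
                  integral {y. F x y < 1} (\<lambda>y. det (fund_tensor (F x) y))"

definition distortion :: "('p \<Rightarrow> real) \<Rightarrow> ('p \<Rightarrow> real^'m \<Rightarrow> real) \<Rightarrow> 'p \<Rightarrow> real^'m \<Rightarrow> real" where
  "distortion \<sigma> F x y = ln (sqrt (det (fund_tensor (F x) y)) / \<sigma> x)"

end

theory Submission
  imports Defs
begin

text \<open>The fundamental tensor \<open>g\<^sub>z\<close> of a Minkowski norm \<open>F\<close> is positive definite,
  invariant under positive rescaling of \<open>z\<close>, and satisfies \<open>g\<^sub>z(z,z) = F(z)\<^sup>2\<close>.
  The uniform constant \<open>\<Lambda>\<close> gives \<open>g\<^sub>z \<le> \<Lambda> g\<^sub>w\<close> for all \<open>z, w \<noteq> 0\<close>; in particular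
  \<open>F\<^sup>2 \<le> \<Lambda> g\<^sub>y\<close>, \<open>g\<^sub>z \<le> \<Lambda> F\<^sup>2\<close> and \<open>\<Lambda> \<ge> 1\<close>. So the unit ball of \<open>F\<close> contains the
  ellipsoid \<open>{g\<^sub>y < 1/\<Lambda>}\<close> and lies in every ellipsoid \<open>{g\<^sub>z < \<Lambda>}\<close>, and the volume of
  \<open>{g < c}\<close> is \<open>vol(B) \<cdot> c^(m/2) / \<surd>det g\<close>. The first inclusion bounds \<open>\<sigma>\<^sub>B\<^sub>H\<close> by
  \<open>\<surd>det g\<^sub>y \<Lambda>\<^sup>m\<close>. The second, together with \<open>{g\<^sub>y < 1} \<subseteq> {g\<^sub>z < \<Lambda>}\<close>, bounds
  \<open>det g\<^sub>z \<cdot> vol{F < 1}\<close> pointwise by \<open>vol(B) \<Lambda>\<^sup>m \<surd>det g\<^sub>y\<close>, and integrating gives the same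
  bound for \<open>\<sigma>\<^sub>H\<^sub>T\<close>. Hence \<open>exp (-\<tau>(y)) = \<sigma>(x) / \<surd>det g\<^sub>y \<le> \<Lambda>\<^sup>m\<close>.\<close>

section \<open>Linear images of balls in coordinate space\<close>

text \<open>The change-of-variables results of HOL-Analysis are stated for coordinate spaces whose
  index type is well-ordered. A copy of an arbitrary finite index type carrying such an order
  lets us transport them to coordinate spaces over every finite index type.\<close>

typedef 'a windex = "UNIV :: 'a set" by auto

instance windex :: (finite) finite
proof
  have "(UNIV :: 'a windex set) = Abs_windex ` UNIV"
    by (metis Rep_windex_inverse surjI)
  moreover have "finite (range (Abs_windex :: 'a \<Rightarrow> 'a windex))" by simp
  ultimately show "finite (UNIV :: 'a windex set)" by simp
qed

definition windex_rank :: "'a::finite windex \<Rightarrow> nat" where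
  "windex_rank a = to_nat_on (UNIV :: 'a set) (Rep_windex a)"

lemma inj_windex_rank: "inj windex_rank"
proof -
  have "countable (UNIV :: 'a set)" by (rule countable_finite) simp
  from inj_on_to_nat_on[OF this] show ?thesis
    unfolding windex_rank_def using Rep_windex_inject by (auto simp: inj_on_def)
qed

instantiation windex :: (finite) linorder
begin
definition less_eq_windex :: "'a windex \<Rightarrow> 'a windex \<Rightarrow> bool" where
  "less_eq_windex a b = (windex_rank a \<le> windex_rank b)"
definition less_windex :: "'a windex \<Rightarrow> 'a windex \<Rightarrow> bool" where
  "less_windex a b = (windex_rank a < windex_rank b)"
instance
  by standard (auto simp: less_eq_windex_def less_windex_def inj_windex_rank[THEN injD])
end

instance windex :: (finite) wellorder
proof
  fix P :: "'a windex \<Rightarrow> bool" and a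
  assume step: "\<And>x. (\<And>y. y < x \<Longrightarrow> P y) \<Longrightarrow> P x"
  show "P a"
    by (induct a rule: measure_induct_rule[where f = windex_rank]) (rule step, auto simp: less_windex_def)
qed

lemma bij_Rep_windex: "bij Rep_windex"
  by (metis Rep_windex_inject Rep_windex_inverse Abs_windex_inverse UNIV_I bij_betw_def inj_onI surjI)

lemma bij_Abs_windex: "bij Abs_windex"
  by (metis Abs_windex_inverse Rep_windex_inverse UNIV_I bij_betw_byWitness subset_UNIV)

lemma card_windex: "CARD('a::finite windex) = CARD('a)"
  using bij_betw_same_card[OF bij_Rep_windex] by simp

lemma sum_windex: "(\<Sum>a\<in>UNIV. g (Rep_windex a)) = (\<Sum>i\<in>UNIV. g i)"
  using sum.reindex_bij_betw[OF bij_Rep_windex] .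

lemma prod_windex: "(\<Prod>a\<in>UNIV. g (Rep_windex a)) = (\<Prod>i\<in>UNIV. g i)"
  using prod.reindex_bij_betw[OF bij_Rep_windex] .

definition relabel_vec :: "real^'n \<Rightarrow> real^('n::finite windex)" where
  "relabel_vec v = (\<chi> a. v $ Rep_windex a)"

definition unlabel_vec :: "real^('n::finite windex) \<Rightarrow> real^'n" where
  "unlabel_vec w = (\<chi> i. w $ Abs_windex i)"

definition relabel_mat :: "real^'n^'n \<Rightarrow> real^('n::finite windex)^('n windex)" where
  "relabel_mat P = (\<chi> a b. P $ Rep_windex a $ Rep_windex b)"

lemma unlabel_relabel_vec [simp]: "unlabel_vec (relabel_vec v) = v"
  by (simp add: unlabel_vec_def relabel_vec_def Abs_windex_inverse vec_eq_iff)

lemma relabel_unlabel_vec [simp]: "relabel_vec (unlabel_vec w) = w"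
  by (simp add: unlabel_vec_def relabel_vec_def Rep_windex_inverse vec_eq_iff)

lemma norm_relabel_vec [simp]: "norm (relabel_vec v) = norm v"
  unfolding norm_vec_def L2_set_def relabel_vec_def
  using sum_windex[where g = "\<lambda>i. (v $ i)\<^sup>2"] by simp

lemma norm_unlabel_vec [simp]: "norm (unlabel_vec w) = norm w"
  by (metis norm_relabel_vec relabel_unlabel_vec)

lemma unlabel_vec_mult: "unlabel_vec (relabel_mat P *v w) = P *v unlabel_vec w"
proof -
  have "(\<Sum>a\<in>UNIV. P $ i $ Rep_windex a * w $ a) = (\<Sum>j\<in>UNIV. P $ i $ j * w $ Abs_windex j)" for i
    using sum_windex[where g = "\<lambda>j. P $ i $ j * w $ Abs_windex j"] by (simp add: Rep_windex_inverse)
  then show ?thesis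
    by (simp add: unlabel_vec_def relabel_mat_def matrix_vector_mult_def vec_eq_iff Abs_windex_inverse)
qed

lemma det_relabel_mat:
  fixes P :: "real^'a::finite^'a"
  shows "det (relabel_mat P) = det P"
proof -
  let ?S = "{q. q permutes (UNIV :: 'a windex set)}"
  let ?T = "{p. p permutes (UNIV :: 'a set)}"
  define h where "h q = (\<lambda>i. Rep_windex (q (Abs_windex i)))" for q :: "'a windex \<Rightarrow> 'a windex"
  have Rep_conj: "permutes_bij_finite q UNIV UNIV Rep_windex Abs_windex" if "q permutes UNIV" for q :: "'a windex \<Rightarrow> 'a windex"
    using that bij_Rep_windex by unfold_locales (auto simp: Rep_windex_inverse)
  have Abs_conj: "permutes_bij_finite p UNIV UNIV Abs_windex Rep_windex" if "p permutes UNIV" for p :: "'a \<Rightarrow> 'a"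
    using that bij_Abs_windex by unfold_locales (auto simp: Abs_windex_inverse)
  have bij: "bij_betw h ?S ?T"
  proof (rule bij_betw_byWitness[where f' = "\<lambda>p a. Abs_windex (p (Rep_windex a))"])
    show "h ` ?S \<subseteq> ?T"
      using permutes_bij.permutes_p'[OF permutes_bij_finite.axioms(1)[OF Rep_conj]] by (auto simp: h_def)
    show "(\<lambda>p a. Abs_windex (p (Rep_windex a))) ` ?T \<subseteq> ?S"
      using permutes_bij.permutes_p'[OF permutes_bij_finite.axioms(1)[OF Abs_conj]] by auto
  qed (auto simp: h_def Rep_windex_inverse Abs_windex_inverse)
  have "det P = (\<Sum>q\<in>?S. of_int (sign (h q)) * (\<Prod>i\<in>UNIV. P $ i $ h q i))"
    unfolding det_def
    using sum.reindex_bij_betw[OF bij, where g = "\<lambda>p. of_int (sign p) * (\<Prod>i\<in>UNIV. P $ i $ p i)"]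
    by simp
  also have "\<dots> = (\<Sum>q\<in>?S. of_int (sign q) * (\<Prod>a\<in>UNIV. relabel_mat P $ a $ q a))"
  proof (rule sum.cong[OF refl])
    fix q assume q: "q \<in> ?S"
    have "sign (h q) = sign q"
      using permutes_bij_finite.sign_p'[OF Rep_conj] q by (auto simp: h_def)
    moreover have "(\<Prod>i\<in>UNIV. P $ i $ h q i) = (\<Prod>a\<in>UNIV. relabel_mat P $ a $ q a)"
      using prod_windex[where g = "\<lambda>i. P $ i $ h q i"] by (simp add: relabel_mat_def h_def Rep_windex_inverse)
    ultimately show "of_int (sign (h q)) * (\<Prod>i\<in>UNIV. P $ i $ h q i)
        = of_int (sign q) * (\<Prod>a\<in>UNIV. relabel_mat P $ a $ q a)"
      by simp
  qed
  also have "\<dots> = det (relabel_mat P)" unfolding det_def ..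
  finally show ?thesis by simp
qed

lemma prod_Basis_cart: "(\<Prod>b\<in>(Basis :: (real^'n) set). x \<bullet> b) = (\<Prod>i\<in>UNIV. x $ i)"
proof -
  have Basis_eq: "(Basis :: (real^'n) set) = (\<lambda>i. axis i 1) ` UNIV"
    by (auto simp: Basis_vec_def)
  have "inj (\<lambda>i::'n. axis i (1::real))" by (auto simp: inj_on_def axis_eq_axis)
  then show ?thesis
    unfolding Basis_eq by (subst prod.reindex) (auto simp: inner_axis)
qed

lemma unlabel_vec_measurable: "unlabel_vec \<in> borel_measurable borel"
proof -
  have "linear unlabel_vec" by (auto simp: linear_iff unlabel_vec_def vec_eq_iff)
  then show ?thesis
    by (intro borel_measurable_continuous_onI linear_continuous_on)
      (simp add: linear_conv_bounded_linear[symmetric])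
qed

lemma distr_unlabel_vec_lborel: "distr lborel borel (unlabel_vec :: real^('n::finite windex) \<Rightarrow> real^'n) = lborel"
proof (rule lborel_eqI[symmetric])
  fix l u :: "real^'n"
  assume le_Basis: "\<And>b. b \<in> Basis \<Longrightarrow> l \<bullet> b \<le> u \<bullet> b"
  have le: "l $ i \<le> u $ i" for i
    using le_Basis[of "axis i 1"] by (auto simp: Basis_vec_def inner_axis)
  have preimage: "unlabel_vec -` box l u = box (relabel_vec l) (relabel_vec u)"
    by (auto simp: mem_box_cart unlabel_vec_def relabel_vec_def Abs_windex_inverse)
       (metis Rep_windex_inverse Abs_windex_inverse UNIV_I)+
  have "emeasure (distr lborel borel unlabel_vec) (box l u) = emeasure lborel (unlabel_vec -` box l u)"
    using emeasure_distr[of unlabel_vec lborel borel "box l u"] unlabel_vec_measurable by simp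
  also have "\<dots> = (\<Prod>b\<in>Basis. (relabel_vec u - relabel_vec l) \<bullet> b)"
    unfolding preimage
    by (rule emeasure_lborel_box) (auto simp: Basis_vec_def inner_axis relabel_vec_def le)
  also have "\<dots> = (\<Prod>b\<in>Basis. (u - l) \<bullet> b)"
    using prod_windex[where g = "\<lambda>i. u $ i - l $ i"] by (simp add: prod_Basis_cart relabel_vec_def)
  finally show "emeasure (distr lborel borel unlabel_vec) (box l u) = (\<Prod>b\<in>Basis. (u - l) \<bullet> b)" .
qed simp

lemma measure_matrix_image_ball:
  fixes P :: "real^'n::finite^'n"
  assumes "invertible P" and "r > 0"
  shows "measure lborel ((\<lambda>w. P *v w) ` ball 0 r) = \<bar>det P\<bar> * measure lborel (ball (0::real^'n) r)"
proof -
  let ?Q = "relabel_mat P"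
  have "invertible ?Q"
    using assms(1) by (simp add: invertible_det_nz det_relabel_mat)
  then have "surj ((*v) ?Q)" "surj ((*v) P)"
    using assms(1) by (metis invertible_def matrix_right_invertible_surjective)+
  then have open_image: "open ((\<lambda>w. ?Q *v w) ` ball 0 r)" "open ((\<lambda>w. P *v w) ` ball 0 r)"
    by (auto intro!: open_surjective_linear_image)
  have borel_image: "(\<lambda>w. P *v w) ` ball 0 r \<in> sets borel"
    using open_image(2) by simp
  have preimage: "unlabel_vec -` ((\<lambda>w. P *v w) ` ball 0 r) = (\<lambda>w. ?Q *v w) ` ball 0 r"
  proof (intro set_eqI iffI)
    fix w assume "w \<in> unlabel_vec -` ((\<lambda>w. P *v w) ` ball 0 r)"
    then obtain u where u: "norm u < r" "unlabel_vec w = P *v u" by auto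
    then have "unlabel_vec (?Q *v relabel_vec u) = unlabel_vec w"
      by (simp add: unlabel_vec_mult)
    then have "w = ?Q *v relabel_vec u"
      by (metis relabel_unlabel_vec)
    with u show "w \<in> (\<lambda>w. ?Q *v w) ` ball 0 r" by auto
  qed (auto simp: unlabel_vec_mult)
  have "measure lborel ((\<lambda>w. P *v w) ` ball 0 r)
      = measure (distr lborel borel unlabel_vec) ((\<lambda>w. P *v w) ` ball 0 r)"
    by (simp add: distr_unlabel_vec_lborel)
  also have "\<dots> = measure lebesgue ((\<lambda>w. ?Q *v w) ` ball 0 r)"
    using measure_distr[OF _ borel_image, of unlabel_vec lborel] unlabel_vec_measurable open_image(1)
    by (simp add: preimage)
  also have "\<dots> = \<bar>det ?Q\<bar> * measure lebesgue (ball (0::real^('n windex)) r)"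
    by (subst measure_linear_image) auto
  also have "\<dots> = \<bar>det P\<bar> * measure lborel (ball (0::real^'n) r)"
    using assms(2) by (simp add: det_relabel_mat content_ball card_windex)
  finally show ?thesis .
qed

section \<open>Volume of ellipsoids\<close>

definition posdef :: "real^'n^'n \<Rightarrow> bool" where
  "posdef S \<longleftrightarrow> transpose S = S \<and> (\<forall>v. v \<noteq> 0 \<longrightarrow> 0 < v \<bullet> (S *v v))"

definition ellipsoid :: "real^'n^'n \<Rightarrow> real \<Rightarrow> (real^'n) set" where
  "ellipsoid S c = {v. v \<bullet> (S *v v) < c}"

lemma inner_symmetric_matrix_commute:
  fixes S :: "real^'n^'n"
  assumes "transpose S = S"
  shows "x \<bullet> (S *v y) = (S *v x) \<bullet> y"
proof -
  have "x \<bullet> (S *v y) = (transpose S *v x) \<bullet> y" by (simp add: dot_lmul_matrix)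
  then show ?thesis using assms by simp
qed

lemma quadratic_form_scaleR: "(c *\<^sub>R v) \<bullet> (S *v (c *\<^sub>R v)) = c\<^sup>2 * (v \<bullet> (S *v (v::real^'n)))"
  by (simp add: matrix_vector_mult_scaleR power2_eq_square)

lemma posdef_orthonormal_family:
  fixes S :: "real^'n^'n"
  assumes "posdef S" and "k \<le> CARD('n)"
  shows "\<exists>e::nat \<Rightarrow> real^'n. \<forall>i<k. \<forall>j<k. e i \<bullet> (S *v e j) = (if i = j then 1 else 0)"
  using assms(2)
proof (induction k)
  case 0
  then show ?case by simp
next
  case (Suc k)
  have sym: "transpose S = S" and pos: "\<And>v. v \<noteq> 0 \<Longrightarrow> 0 < v \<bullet> (S *v v)"
    using assms(1) by (auto simp: posdef_def)
  from Suc obtain e :: "nat \<Rightarrow> real^'n"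
    where e: "\<forall>i<k. \<forall>j<k. e i \<bullet> (S *v e j) = (if i = j then 1 else 0)"
    by auto
  let ?B = "(\<lambda>i. S *v e i) ` {..<k}"
  have "dim ?B \<le> card ?B" by (rule dim_le_card) (auto intro: span_base)
  also have "\<dots> \<le> k" using card_image_le[of "{..<k}" "\<lambda>i. S *v e i"] by simp
  also have "k < DIM(real^'n)" using Suc.prems by simp
  finally obtain w where w: "w \<noteq> 0" "\<And>y. y \<in> span ?B \<Longrightarrow> orthogonal w y"
    using orthogonal_to_subspace_exists by blast
  have w_orth: "w \<bullet> (S *v e i) = 0" "e i \<bullet> (S *v w) = 0" if "i < k" for i
    using w(2)[of "S *v e i"] that inner_symmetric_matrix_commute[OF sym, of "e i" w]
    by (auto simp: orthogonal_def inner_commute intro: span_base)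
  define \<alpha> where "\<alpha> = w \<bullet> (S *v w)"
  have "\<alpha> > 0" using pos w(1) by (simp add: \<alpha>_def)
  have "((1 / sqrt \<alpha>) *\<^sub>R w) \<bullet> (S *v ((1 / sqrt \<alpha>) *\<^sub>R w)) = (1 / sqrt \<alpha>)\<^sup>2 * \<alpha>"
    unfolding \<alpha>_def by (rule quadratic_form_scaleR)
  also have "\<dots> = 1"
    using \<open>\<alpha> > 0\<close> by (simp add: power_divide)
  finally have w_unit: "((1 / sqrt \<alpha>) *\<^sub>R w) \<bullet> (S *v ((1 / sqrt \<alpha>) *\<^sub>R w)) = 1" .
  define e' where "e' = e(k := (1 / sqrt \<alpha>) *\<^sub>R w)"
  have "e' i \<bullet> (S *v e' j) = (if i = j then 1 else 0)" if "i < Suc k" "j < Suc k" for i j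
    using that e w_orth w_unit
    by (cases "i < k"; cases "j < k") (auto simp: e'_def matrix_vector_mult_scaleR less_Suc_eq)
  then show ?case by blast
qed

lemma posdef_congruent_mat1:
  fixes S :: "real^'n^'n"
  assumes "posdef S"
  obtains P :: "real^'n^'n" where "transpose P ** S ** P = mat 1"
proof -
  obtain e :: "nat \<Rightarrow> real^'n"
    where e: "\<forall>i<CARD('n). \<forall>j<CARD('n). e i \<bullet> (S *v e j) = (if i = j then 1 else 0)"
    using posdef_orthonormal_family[OF assms order_refl] by auto
  obtain h :: "'n \<Rightarrow> nat" where h: "bij_betw h UNIV {0..<CARD('n)}"
    using ex_bij_betw_finite_nat[of "UNIV :: 'n set"] by auto
  define P :: "real^'n^'n" where "P = (\<chi> r c. e (h c) $ r)"
  have "(transpose P ** S ** P) $ a $ b = e (h a) \<bullet> (S *v e (h b))" for a b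
  proof -
    have "(transpose P ** S ** P) $ a $ b
        = (\<Sum>k\<in>UNIV. \<Sum>r\<in>UNIV. e (h a) $ r * S $ r $ k * e (h b) $ k)"
      by (simp add: matrix_matrix_mult_def transpose_def P_def sum_distrib_right)
    also have "\<dots> = (\<Sum>r\<in>UNIV. \<Sum>k\<in>UNIV. e (h a) $ r * S $ r $ k * e (h b) $ k)"
      by (rule sum.swap)
    also have "\<dots> = e (h a) \<bullet> (S *v e (h b))"
      by (simp add: inner_vec_def matrix_vector_mult_def sum_distrib_left mult.assoc)
    finally show ?thesis .
  qed
  moreover have "h a < CARD('n)" "h a = h b \<longleftrightarrow> a = b" for a b
    using h by (auto simp: bij_betw_def inj_on_def)
  ultimately have "transpose P ** S ** P = mat 1"
    by (simp add: vec_eq_iff e mat_def)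
  then show thesis by (rule that)
qed

lemma det_congruent_mat1:
  fixes S :: "real^'n^'n" and P :: "real^'n^'n"
  assumes "transpose P ** S ** P = mat 1"
  shows "(det P)\<^sup>2 * det S = 1"
proof -
  have "det (transpose P ** S ** P) = 1" using assms by simp
  then show ?thesis by (simp add: det_mul power2_eq_square mult_ac)
qed

lemma det_pos_if_posdef:
  fixes S :: "real^'n^'n"
  assumes "posdef S"
  shows "det S > 0"
proof -
  obtain P :: "real^'n^'n" where "transpose P ** S ** P = mat 1"
    using posdef_congruent_mat1[OF assms] .
  then have "(det P)\<^sup>2 * det S = 1" by (rule det_congruent_mat1)
  moreover have "(det P)\<^sup>2 \<ge> 0" by simp
  ultimately show ?thesis
    by (smt (verit) mult_nonneg_nonpos)
qed

lemma ellipsoid_eq_image_ball: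
  fixes S P :: "real^'n^'n"
  assumes congruent: "transpose P ** S ** P = mat 1" and "c > 0"
  shows "ellipsoid S c = (\<lambda>w. P *v w) ` ball 0 (sqrt c)"
proof -
  have form_image: "(P *v w) \<bullet> (S *v (P *v w)) = w \<bullet> w" for w
  proof -
    have "P *v w = w v* transpose P"
      by (metis transpose_matrix_vector transpose_transpose)
    then have "(P *v w) \<bullet> (S *v (P *v w)) = w \<bullet> (transpose P *v (S *v (P *v w)))"
      by (metis dot_lmul_matrix)
    also have "\<dots> = w \<bullet> ((transpose P ** S ** P) *v w)"
      by (simp only: matrix_vector_mul_assoc matrix_mul_assoc)
    finally show ?thesis by (simp add: congruent)
  qed
  have right_inverse: "P ** (transpose P ** S) = mat 1"
    using congruent matrix_left_right_inverse by blast
  have "v \<in> (\<lambda>w. P *v w) ` ball 0 (sqrt c)" if "v \<bullet> (S *v v) < c" for v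
  proof -
    define w where "w = (transpose P ** S) *v v"
    have v_eq: "v = P *v w" by (simp add: w_def matrix_vector_mul_assoc right_inverse)
    have "(norm w)\<^sup>2 < c" using that form_image[of w] v_eq by (simp add: power2_norm_eq_inner)
    then show ?thesis using v_eq real_less_rsqrt by auto
  qed
  moreover have "(P *v w) \<bullet> (S *v (P *v w)) < c" if "norm w < sqrt c" for w
  proof -
    have "(norm w)\<^sup>2 < c"
      using that assms(2) real_sqrt_less_iff[of "(norm w)\<^sup>2" c] by simp
    then show ?thesis by (simp add: form_image power2_norm_eq_inner)
  qed
  ultimately show ?thesis by (auto simp: ellipsoid_def)
qed

lemma
  fixes S :: "real^'n^'n"
  assumes "posdef S" and "c > 0"
  shows fmeasurable_ellipsoid: "ellipsoid S c \<in> fmeasurable lborel"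
    and bounded_ellipsoid: "bounded (ellipsoid S c)"
    and measure_ellipsoid:
      "measure lborel (ellipsoid S c) = measure lborel (ball (0::real^'n) 1) * sqrt c ^ CARD('n) / sqrt (det S)"
proof -
  obtain P :: "real^'n^'n" where congruent: "transpose P ** S ** P = mat 1"
    using posdef_congruent_mat1[OF assms(1)] .
  then have "invertible P"
    by (metis invertible_left_inverse)
  then have "open ((\<lambda>w. P *v w) ` ball 0 (sqrt c))"
    by (metis invertible_def matrix_right_invertible_surjective open_ball open_surjective_linear_image
        matrix_vector_mul_linear)
  moreover show bounded: "bounded (ellipsoid S c)"
    unfolding ellipsoid_eq_image_ball[OF congruent assms(2)]
    by (intro bounded_linear_image) (auto simp: linear_conv_bounded_linear[symmetric])
  ultimately show "ellipsoid S c \<in> fmeasurable lborel"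
    unfolding ellipsoid_eq_image_ball[OF congruent assms(2)]
    using emeasure_bounded_finite by (auto simp: fmeasurable_def less_top)
  have "(det P)\<^sup>2 = 1 / det S"
    using det_congruent_mat1[OF congruent] det_pos_if_posdef[OF assms(1)] by (simp add: field_simps)
  then have "\<bar>det P\<bar> = 1 / sqrt (det S)"
    by (metis real_sqrt_abs real_sqrt_divide real_sqrt_one)
  then show "measure lborel (ellipsoid S c) = measure lborel (ball (0::real^'n) 1) * sqrt c ^ CARD('n) / sqrt (det S)"
    using assms(2) \<open>invertible P\<close>
    by (simp add: ellipsoid_eq_image_ball[OF congruent] measure_matrix_image_ball
        content_ball_conv_unit_ball[of "sqrt c"])
qed

section \<open>Symmetry of second partial derivatives\<close>

lemma sum_mult_axis [simp]: "(\<Sum>k\<in>UNIV. G k * axis i (1::real) $ k) = G i"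
  by (simp add: axis_def if_distrib sum.delta cong: if_cong)

lemma sum_mult_scaleR_axis: "(\<Sum>k\<in>UNIV. G k * (h *\<^sub>R axis i (1::real)) $ k) = h * G i"
  by (simp add: axis_def if_distrib sum.delta cong: if_cong)

lemma has_real_derivative_along_axis:
  fixes g :: "real^'n \<Rightarrow> real"
  assumes "(g has_derivative (\<lambda>h. \<Sum>k\<in>UNIV. G k * h $ k)) (at (a + s *\<^sub>R axis i 1))"
  shows "((\<lambda>s. g (a + s *\<^sub>R axis i 1)) has_real_derivative G i) (at s)"
proof -
  have "((\<lambda>s. a + s *\<^sub>R axis i (1::real)) has_derivative (\<lambda>h. h *\<^sub>R axis i 1)) (at s)"
    by (auto intro!: derivative_eq_intros)
  from has_derivative_compose[OF this assms]
  have "((\<lambda>s. g (a + s *\<^sub>R axis i 1)) has_derivative (\<lambda>h. \<Sum>k\<in>UNIV. G k * (h *\<^sub>R axis i 1) $ k)) (at s)"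
    by (simp add: o_def)
  moreover have "(\<lambda>h. \<Sum>k\<in>UNIV. G k * (h *\<^sub>R axis i 1) $ k) = (*) (G i)"
    by (rule ext) (simp only: sum_mult_scaleR_axis mult.commute)
  ultimately show ?thesis
    by (simp only: has_field_derivative_def)
qed

lemma axis_rectangle_subset_cball:
  fixes y :: "real^'n"
  assumes "0 \<le> s" "s \<le> h" "0 \<le> t" "t \<le> h"
  shows "y + s *\<^sub>R axis i 1 + t *\<^sub>R axis j 1 \<in> cball y (2 * h)"
proof -
  have "norm (s *\<^sub>R axis i (1::real) + t *\<^sub>R axis j 1) \<le> norm (s *\<^sub>R axis i (1::real)) + norm (t *\<^sub>R axis j (1::real))"
    by (rule norm_triangle_ineq)
  also have "\<dots> = s + t" using assms by (simp add: norm_axis_1)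
  finally have "dist (y + s *\<^sub>R axis i 1 + t *\<^sub>R axis j 1) y \<le> 2 * h"
    using assms by (simp add: dist_norm add.assoc)
  then show ?thesis by (simp add: dist_commute)
qed

text \<open>Two applications of the mean value theorem express the second difference of \<open>g\<close>
  over a square of side \<open>h\<close> through one value of a mixed partial derivative.\<close>

lemma second_difference_mean_value:
  fixes g :: "real^'n \<Rightarrow> real"
  assumes sub: "cball y (2 * h) \<subseteq> U" and h: "h > 0"
    and d1: "\<forall>z\<in>U. (g has_derivative (\<lambda>v. \<Sum>k\<in>UNIV. g1 k z * v $ k)) (at z)"
    and d2: "\<forall>z\<in>U. (g1 i has_derivative (\<lambda>v. \<Sum>k\<in>UNIV. g2 k i z * v $ k)) (at z)"
  obtains p where "dist p y \<le> 2 * h"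
    and "g (y + h *\<^sub>R axis i 1 + h *\<^sub>R axis j 1) - g (y + h *\<^sub>R axis i 1) - g (y + h *\<^sub>R axis j 1) + g y
       = h * h * g2 j i p"
proof -
  let ?ei = "axis i (1::real)" and ?ej = "axis j (1::real)"
  have in_U: "y + s *\<^sub>R ?ei + t *\<^sub>R ?ej \<in> U" if "0 \<le> s" "s \<le> h" "0 \<le> t" "t \<le> h" for s t
    using axis_rectangle_subset_cball[OF that] sub by blast
  define \<phi> where "\<phi> s = g ((y + h *\<^sub>R ?ej) + s *\<^sub>R ?ei) - g (y + s *\<^sub>R ?ei)" for s
  have "DERIV \<phi> s :> (g1 i ((y + h *\<^sub>R ?ej) + s *\<^sub>R ?ei) - g1 i (y + s *\<^sub>R ?ei))"
    if "0 \<le> s" "s \<le> h" for s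
  proof -
    have "(y + h *\<^sub>R ?ej) + s *\<^sub>R ?ei \<in> U" "y + s *\<^sub>R ?ei \<in> U"
      using in_U[of s h] in_U[of s 0] that h by (simp_all add: add_ac)
    then show ?thesis unfolding \<phi>_def
      by (intro DERIV_diff has_real_derivative_along_axis) (use d1 in auto)
  qed
  then obtain \<xi> where \<xi>: "0 < \<xi>" "\<xi> < h"
    "\<phi> h - \<phi> 0 = h * (g1 i ((y + h *\<^sub>R ?ej) + \<xi> *\<^sub>R ?ei) - g1 i (y + \<xi> *\<^sub>R ?ei))"
    using MVT2[OF h, of \<phi> "\<lambda>s. g1 i ((y + h *\<^sub>R ?ej) + s *\<^sub>R ?ei) - g1 i (y + s *\<^sub>R ?ei)"]
    by auto
  define \<psi> where "\<psi> t = g1 i ((y + \<xi> *\<^sub>R ?ei) + t *\<^sub>R ?ej)" for t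
  have "DERIV \<psi> t :> g2 j i ((y + \<xi> *\<^sub>R ?ei) + t *\<^sub>R ?ej)" if "0 \<le> t" "t \<le> h" for t
    unfolding \<psi>_def using in_U[of \<xi> t] that \<xi> d2
    by (intro has_real_derivative_along_axis) auto
  then obtain \<eta> where \<eta>: "0 < \<eta>" "\<eta> < h" "\<psi> h - \<psi> 0 = h * g2 j i ((y + \<xi> *\<^sub>R ?ei) + \<eta> *\<^sub>R ?ej)"
    using MVT2[OF h, of \<psi> "\<lambda>t. g2 j i ((y + \<xi> *\<^sub>R ?ei) + t *\<^sub>R ?ej)"] by auto
  define p where "p = (y + \<xi> *\<^sub>R ?ei) + \<eta> *\<^sub>R ?ej"
  have dist_p: "dist p y \<le> 2 * h"
    using axis_rectangle_subset_cball[where s = \<xi> and t = \<eta> and y = y and i = i and j = j] \<xi> \<eta>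
    by (simp add: p_def dist_commute)
  have swap: "(y + h *\<^sub>R ?ej) + \<xi> *\<^sub>R ?ei = (y + \<xi> *\<^sub>R ?ei) + h *\<^sub>R ?ej"
    by (simp add: add_ac)
  have "\<phi> h - \<phi> 0 = h * (\<psi> h - \<psi> 0)"
    using \<xi>(3) by (simp add: \<psi>_def swap)
  also have "\<dots> = h * h * g2 j i p"
    using \<eta>(3) by (simp add: p_def)
  finally have "\<phi> h - \<phi> 0 = h * h * g2 j i p" .
  moreover have "\<phi> h - \<phi> 0 = g (y + h *\<^sub>R ?ei + h *\<^sub>R ?ej) - g (y + h *\<^sub>R ?ei) - g (y + h *\<^sub>R ?ej) + g y"
    by (simp add: \<phi>_def add_ac)
  ultimately show thesis
    using that[OF dist_p] by simp
qed

lemma symmetric_second_partials: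
  fixes g :: "real^'n \<Rightarrow> real"
  assumes U: "open U" "y \<in> U"
    and d1: "\<forall>z\<in>U. (g has_derivative (\<lambda>v. \<Sum>k\<in>UNIV. g1 k z * v $ k)) (at z)"
    and d2: "\<forall>i. \<forall>z\<in>U. (g1 i has_derivative (\<lambda>v. \<Sum>k\<in>UNIV. g2 k i z * v $ k)) (at z)"
    and cont: "\<forall>i j. \<forall>z\<in>U. isCont (g2 j i) z"
  shows "g2 j i y = g2 i j y"
proof (rule ccontr)
  assume "g2 j i y \<noteq> g2 i j y"
  define \<epsilon> where "\<epsilon> = \<bar>g2 j i y - g2 i j y\<bar> / 2"
  have \<epsilon>: "\<epsilon> > 0" using \<open>g2 j i y \<noteq> g2 i j y\<close> by (simp add: \<epsilon>_def)
  obtain \<delta>0 where \<delta>0: "\<delta>0 > 0" "cball y \<delta>0 \<subseteq> U"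
    using U open_contains_cball by blast
  obtain \<delta>1 where \<delta>1: "\<delta>1 > 0" "\<And>p. dist p y < \<delta>1 \<Longrightarrow> dist (g2 j i p) (g2 j i y) < \<epsilon>"
    using cont U(2) \<epsilon> unfolding continuous_at_eps_delta by meson
  obtain \<delta>2 where \<delta>2: "\<delta>2 > 0" "\<And>p. dist p y < \<delta>2 \<Longrightarrow> dist (g2 i j p) (g2 i j y) < \<epsilon>"
    using cont U(2) \<epsilon> unfolding continuous_at_eps_delta by meson
  define h where "h = min \<delta>0 (min \<delta>1 \<delta>2) / 4"
  have h: "h > 0" "2 * h \<le> \<delta>0" "2 * h < \<delta>1" "2 * h < \<delta>2"
    using \<delta>0 \<delta>1 \<delta>2 by (auto simp: h_def)
  then have sub: "cball y (2 * h) \<subseteq> U" using \<delta>0 subset_cball by blast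
  obtain p1 where p1: "dist p1 y \<le> 2 * h"
    "g (y + h *\<^sub>R axis i 1 + h *\<^sub>R axis j 1) - g (y + h *\<^sub>R axis i 1) - g (y + h *\<^sub>R axis j 1) + g y
       = h * h * g2 j i p1"
    using second_difference_mean_value[where g = g and ?g1.0 = g1 and ?g2.0 = g2 and i = i and j = j,
        OF sub h(1) d1 d2[THEN spec[of _ i]]] by blast
  obtain p2 where p2: "dist p2 y \<le> 2 * h"
    "g (y + h *\<^sub>R axis j 1 + h *\<^sub>R axis i 1) - g (y + h *\<^sub>R axis j 1) - g (y + h *\<^sub>R axis i 1) + g y
       = h * h * g2 i j p2"
    using second_difference_mean_value[where g = g and ?g1.0 = g1 and ?g2.0 = g2 and i = j and j = i,
        OF sub h(1) d1 d2[THEN spec[of _ j]]] by blast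
  have "g (y + h *\<^sub>R axis j 1 + h *\<^sub>R axis i 1) = g (y + h *\<^sub>R axis i 1 + h *\<^sub>R axis j (1::real))"
    by (simp add: add_ac)
  then have "h * h * g2 j i p1 = h * h * g2 i j p2"
    using p1(2) p2(2) by linarith
  then have "g2 j i p1 = g2 i j p2" using h(1) by simp
  moreover have "dist (g2 j i p1) (g2 j i y) < \<epsilon>" "dist (g2 i j p2) (g2 i j y) < \<epsilon>"
    using p1(1) p2(1) h \<delta>1(2) \<delta>2(2) by auto
  ultimately show False
    by (simp add: dist_real_def \<epsilon>_def) (smt (verit, best) abs_triangle_ineq4)
qed

section \<open>The fundamental tensor of a Minkowski norm\<close>

lemma partial_derivative_homogeneous:
  fixes g :: "real^'n \<Rightarrow> real"
  assumes "t > 0" and "y \<noteq> 0"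
    and hom: "\<And>z. z \<noteq> 0 \<Longrightarrow> g (t *\<^sub>R z) = c * g z"
    and dy: "(g has_derivative (\<lambda>h. \<Sum>k\<in>UNIV. G k y * h $ k)) (at y)"
    and dty: "(g has_derivative (\<lambda>h. \<Sum>k\<in>UNIV. G k (t *\<^sub>R y) * h $ k)) (at (t *\<^sub>R y))"
  shows "t * G i (t *\<^sub>R y) = c * G i y"
proof -
  have "((\<lambda>z. t *\<^sub>R z) has_derivative (\<lambda>h. t *\<^sub>R h)) (at y)"
    by (rule has_derivative_scaleR_right[OF has_derivative_ident])
  from has_derivative_compose[OF this dty]
  have "((\<lambda>z. g (t *\<^sub>R z)) has_derivative (\<lambda>h. \<Sum>k\<in>UNIV. G k (t *\<^sub>R y) * (t *\<^sub>R h) $ k)) (at y)"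
    by (simp add: o_def)
  then have "((\<lambda>z. c * g z) has_derivative (\<lambda>h. \<Sum>k\<in>UNIV. G k (t *\<^sub>R y) * (t *\<^sub>R h) $ k)) (at y)"
    by (rule has_derivative_transform_within_open[where s = "- {0}"]) (use assms in \<open>auto simp: open_Compl\<close>)
  moreover have "((\<lambda>z. c * g z) has_derivative (\<lambda>h. c * (\<Sum>k\<in>UNIV. G k y * h $ k))) (at y)"
    by (rule has_derivative_mult_right[OF dy])
  ultimately have "(\<lambda>h. \<Sum>k\<in>UNIV. G k (t *\<^sub>R y) * (t *\<^sub>R h) $ k) = (\<lambda>h. c * (\<Sum>k\<in>UNIV. G k y * h $ k))"
    by (rule has_derivative_unique)
  from fun_cong[OF this, of "axis i 1"] show ?thesis
    by (simp only: sum_mult_scaleR_axis sum_mult_axis)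
qed

lemma euler_homogeneous:
  fixes g :: "real^'n \<Rightarrow> real"
  assumes hom: "\<And>t. t > 0 \<Longrightarrow> g (t *\<^sub>R y) = t ^ a * g y"
    and dy: "(g has_derivative (\<lambda>h. \<Sum>k\<in>UNIV. G k * h $ k)) (at y)"
  shows "(\<Sum>k\<in>UNIV. G k * y $ k) = a * g y"
proof -
  have "((\<lambda>t::real. t *\<^sub>R y) has_derivative (\<lambda>h. h *\<^sub>R y)) (at 1)"
    by (rule has_derivative_scaleR_left[OF has_derivative_ident])
  moreover have "(g has_derivative (\<lambda>h. \<Sum>k\<in>UNIV. G k * h $ k)) (at ((\<lambda>t::real. t *\<^sub>R y) 1))"
    using dy by simp
  ultimately have "((\<lambda>t. g (t *\<^sub>R y)) has_derivative (\<lambda>h. \<Sum>k\<in>UNIV. G k * (h *\<^sub>R y) $ k)) (at 1)"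
    unfolding o_def[symmetric] by (rule has_derivative_compose)
  then have "((\<lambda>t. t ^ a * g y) has_derivative (\<lambda>h. \<Sum>k\<in>UNIV. G k * (h *\<^sub>R y) $ k)) (at 1)"
    by (rule has_derivative_transform_within_open[where s = "{0<..}"]) (simp_all add: hom)
  moreover have "((\<lambda>t. t ^ a * g y) has_derivative (\<lambda>h. h * (a * g y))) (at (1::real))"
    by (auto intro!: derivative_eq_intros)
  ultimately have "(\<lambda>h. \<Sum>k\<in>UNIV. G k * (h *\<^sub>R y) $ k) = (\<lambda>h. h * (a * g y))"
    by (rule has_derivative_unique)
  from fun_cong[OF this, of 1] show ?thesis by simp
qed

locale homogeneous_partials =
  fixes f :: "real^'n \<Rightarrow> real" and D :: "'n list \<Rightarrow> real^'n \<Rightarrow> real"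
  assumes D_Nil: "D [] = f"
    and D_Cons: "\<And>ks y. y \<noteq> 0 \<Longrightarrow> (D ks has_derivative (\<lambda>h. \<Sum>i\<in>UNIV. D (i # ks) y * h $ i)) (at y)"
    and homogeneous: "\<And>y t. t > 0 \<Longrightarrow> f (t *\<^sub>R y) = t * f y"
begin

lemma has_derivative_f: "y \<noteq> 0 \<Longrightarrow> (f has_derivative (\<lambda>h. \<Sum>i\<in>UNIV. D [i] y * h $ i)) (at y)"
  using D_Cons[of y "[]"] by (simp add: D_Nil)

lemma grad_E_eq:
  assumes "y \<noteq> 0"
  shows "grad_E f y $ i = f y * D [i] y"
proof -
  have "((\<lambda>z. (f z)\<^sup>2 / 2) has_derivative (\<lambda>h. f y * (\<Sum>k\<in>UNIV. D [k] y * h $ k))) (at y)"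
    using has_derivative_f[OF assms] by (auto intro!: derivative_eq_intros)
  then show ?thesis
    by (simp add: grad_E_def frechet_derivative_at[symmetric])
qed

lemma fund_tensor_eq:
  assumes "y \<noteq> 0"
  shows "fund_tensor f y $ i $ j = D [j] y * D [i] y + f y * D [j, i] y"
proof -
  have "((\<lambda>z. f z * D [i] z) has_derivative
      (\<lambda>h. f y * (\<Sum>k\<in>UNIV. D [k, i] y * h $ k) + (\<Sum>k\<in>UNIV. D [k] y * h $ k) * D [i] y)) (at y)"
    using has_derivative_mult[OF has_derivative_f[OF assms] D_Cons[OF assms, of "[i]"]] by simp
  then have "((\<lambda>z. grad_E f z $ i) has_derivative
      (\<lambda>h. f y * (\<Sum>k\<in>UNIV. D [k, i] y * h $ k) + (\<Sum>k\<in>UNIV. D [k] y * h $ k) * D [i] y)) (at y)"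
    by (rule has_derivative_transform_within_open[where s = "- {0}"])
      (simp_all add: assms grad_E_eq open_Compl)
  then show ?thesis
    by (simp add: fund_tensor_def frechet_derivative_at[symmetric])
qed

lemma transpose_fund_tensor:
  assumes "y \<noteq> 0"
  shows "transpose (fund_tensor f y) = fund_tensor f y"
proof -
  have "isCont (D [j, i]) z" if "z \<noteq> 0" for i j z
    using D_Cons[OF that, of "[j, i]"] has_derivative_continuous by blast
  then have "D [j, i] y = D [i, j] y" for i j
    using assms D_Cons has_derivative_f
    by (intro symmetric_second_partials[where U = "- {0}" and g = f and ?g1.0 = "\<lambda>k. D [k]"
          and ?g2.0 = "\<lambda>k i. D [k, i]"]) (auto simp: open_Compl)
  then show ?thesis
    by (simp add: vec_eq_iff transpose_def fund_tensor_eq[OF assms] mult.commute)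
qed

lemma partial_scaleR:
  assumes "y \<noteq> 0" and "t > 0"
  shows "D [i] (t *\<^sub>R y) = D [i] y"
  using partial_derivative_homogeneous[where g = f and G = "\<lambda>k. D [k]" and c = t, OF assms(2,1)]
    homogeneous has_derivative_f assms by simp

lemma second_partial_scaleR:
  assumes "y \<noteq> 0" and "t > 0"
  shows "t * D [j, i] (t *\<^sub>R y) = D [j, i] y"
  using partial_derivative_homogeneous[where g = "D [i]" and G = "\<lambda>k. D [k, i]" and c = 1, OF assms(2,1)]
    partial_scaleR D_Cons assms by simp

lemma fund_tensor_scaleR:
  assumes "y \<noteq> 0" and "t > 0"
  shows "fund_tensor f (t *\<^sub>R y) = fund_tensor f y"
proof -
  have "f (t *\<^sub>R y) * D [j, i] (t *\<^sub>R y) = f y * D [j, i] y" for i j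
    using second_partial_scaleR[OF assms, of j i] by (simp add: homogeneous[OF assms(2)] mult.assoc)
  with assms show ?thesis
    by (simp add: vec_eq_iff fund_tensor_eq partial_scaleR)
qed

lemma fund_tensor_form_self:
  assumes "y \<noteq> 0"
  shows "y \<bullet> (fund_tensor f y *v y) = (f y)\<^sup>2"
proof -
  have euler: "(\<Sum>k\<in>UNIV. D [k] y * y $ k) = f y"
    using euler_homogeneous[where a = 1, OF _ has_derivative_f[OF assms]] homogeneous by simp
  have euler_partial: "(\<Sum>k\<in>UNIV. D [k, i] y * y $ k) = 0" for i
    using euler_homogeneous[where a = 0, OF _ D_Cons[OF assms, of "[i]"]] partial_scaleR[OF assms] by simp
  have row: "(\<Sum>j\<in>UNIV. fund_tensor f y $ i $ j * y $ j) = D [i] y * f y" for i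
  proof -
    have "(\<Sum>j\<in>UNIV. fund_tensor f y $ i $ j * y $ j)
        = D [i] y * (\<Sum>j\<in>UNIV. D [j] y * y $ j) + f y * (\<Sum>j\<in>UNIV. D [j, i] y * y $ j)"
      by (simp add: fund_tensor_eq[OF assms] algebra_simps sum.distrib sum_distrib_left)
    then show ?thesis by (simp add: euler euler_partial)
  qed
  have "y \<bullet> (fund_tensor f y *v y) = (\<Sum>i\<in>UNIV. y $ i * (D [i] y * f y))"
    by (simp add: inner_vec_def matrix_vector_mult_def row)
  also have "\<dots> = (\<Sum>i\<in>UNIV. D [i] y * y $ i) * f y"
    by (subst sum_distrib_right) (simp add: mult_ac)
  finally show ?thesis by (simp add: euler power2_eq_square)
qed

end

lemma minkowski_norm_homogeneous_partials:
  assumes "minkowski_norm f"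
  obtains D where "homogeneous_partials f D"
proof -
  from assms obtain D where "D [] = f"
    and "\<forall>ks. \<forall>y\<in>- {0}. (D ks has_derivative (\<lambda>h. \<Sum>i\<in>UNIV. D (i # ks) y * h $ i)) (at y)"
    unfolding minkowski_norm_def smooth_on_R_def by blast
  with assms have "homogeneous_partials f D"
    by unfold_locales (auto simp: minkowski_norm_def)
  then show thesis by (rule that)
qed

context
  fixes f :: "real^'n \<Rightarrow> real"
  assumes minkowski: "minkowski_norm f"
begin

lemma minkowski_norm_zero [simp]: "f 0 = 0"
  and minkowski_norm_pos: "v \<noteq> 0 \<Longrightarrow> f v > 0"
  and minkowski_norm_scaleR: "t > 0 \<Longrightarrow> f (t *\<^sub>R v) = t * f v"
  using minkowski by (auto simp: minkowski_norm_def)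

lemma minkowski_norm_nonneg: "f v \<ge> 0"
  using minkowski_norm_pos[of v] by (cases "v = 0") auto

lemma posdef_fund_tensor:
  assumes "z \<noteq> 0"
  shows "posdef (fund_tensor f z)"
proof -
  obtain D where "homogeneous_partials f D"
    using minkowski_norm_homogeneous_partials[OF minkowski] .
  then show ?thesis
    using minkowski assms homogeneous_partials.transpose_fund_tensor
    by (simp add: posdef_def minkowski_norm_def)
qed

lemma fund_tensor_scaleR: "z \<noteq> 0 \<Longrightarrow> t > 0 \<Longrightarrow> fund_tensor f (t *\<^sub>R z) = fund_tensor f z"
  by (rule minkowski_norm_homogeneous_partials[OF minkowski])
    (rule homogeneous_partials.fund_tensor_scaleR)

lemma fund_tensor_form_self: "z \<noteq> 0 \<Longrightarrow> z \<bullet> (fund_tensor f z *v z) = (f z)\<^sup>2"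
  by (rule minkowski_norm_homogeneous_partials[OF minkowski])
    (rule homogeneous_partials.fund_tensor_form_self)

lemma fund_tensor_normalize: "z \<noteq> 0 \<Longrightarrow> fund_tensor f ((1 / f z) *\<^sub>R z) = fund_tensor f z"
  and minkowski_norm_normalize: "z \<noteq> 0 \<Longrightarrow> f ((1 / f z) *\<^sub>R z) = 1"
  using minkowski_norm_pos[of z] by (simp_all add: fund_tensor_scaleR minkowski_norm_scaleR)

lemma sets_minkowski_unit_ball: "{v. f v < 1} \<in> sets borel"
proof -
  obtain D where "homogeneous_partials f D"
    using minkowski_norm_homogeneous_partials[OF minkowski] .
  then have "continuous_on (- {0}) f"
    by (intro continuous_at_imp_continuous_on)
      (auto dest: homogeneous_partials.has_derivative_f has_derivative_continuous)
  then have "open (f -` {..<1} \<inter> - {0})"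
    by (auto simp: continuous_on_open_vimage open_Compl)
  moreover have "{v. f v < 1} = (f -` {..<1} \<inter> - {0}) \<union> {0}"
    by auto
  ultimately show ?thesis by simp
qed

end

section \<open>Volume bounds for a uniformly elliptic Minkowski norm\<close>

locale uniform_minkowski_norm =
  fixes f :: "real^'n \<Rightarrow> real" and L :: real
  assumes minkowski: "minkowski_norm f"
    and fund_form_le:
      "\<And>z w v. z \<noteq> 0 \<Longrightarrow> w \<noteq> 0 \<Longrightarrow> v \<bullet> (fund_tensor f z *v v) \<le> L * (v \<bullet> (fund_tensor f w *v v))"
begin

abbreviation unit_ball :: "(real^'n) set" where
  "unit_ball \<equiv> {v. f v < 1}"

lemma one_le_L: "1 \<le> L"
proof -
  define e :: "real^'n" where "e = axis undefined 1"
  have "e \<noteq> 0" by (simp add: e_def axis_eq_0_iff)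
  then have "0 < e \<bullet> (fund_tensor f e *v e)"
    using posdef_fund_tensor[OF minkowski] by (simp add: posdef_def)
  moreover have "e \<bullet> (fund_tensor f e *v e) \<le> L * (e \<bullet> (fund_tensor f e *v e))"
    using fund_form_le[OF \<open>e \<noteq> 0\<close> \<open>e \<noteq> 0\<close>] .
  ultimately show ?thesis
    by (metis mult_le_cancel_right1 mult.commute)
qed

lemma norm_sq_le_fund_form: "w \<noteq> 0 \<Longrightarrow> (f v)\<^sup>2 \<le> L * (v \<bullet> (fund_tensor f w *v v))"
  using fund_form_le[of v w v] by (cases "v = 0") (simp_all add: fund_tensor_form_self[OF minkowski] minkowski_norm_zero[OF minkowski])

lemma fund_form_le_norm_sq: "z \<noteq> 0 \<Longrightarrow> v \<bullet> (fund_tensor f z *v v) \<le> L * (f v)\<^sup>2"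
  using fund_form_le[of z v v] by (cases "v = 0") (simp_all add: fund_tensor_form_self[OF minkowski] minkowski_norm_zero[OF minkowski])

lemma ellipsoid_subset_unit_ball:
  assumes "y \<noteq> 0"
  shows "ellipsoid (fund_tensor f y) (1 / L) \<subseteq> unit_ball"
proof
  fix v assume "v \<in> ellipsoid (fund_tensor f y) (1 / L)"
  then have "L * (v \<bullet> (fund_tensor f y *v v)) < 1"
    using one_le_L by (simp add: ellipsoid_def field_simps)
  then have "(f v)\<^sup>2 < 1"
    using norm_sq_le_fund_form[OF assms, of v] by linarith
  then show "v \<in> unit_ball"
    using minkowski_norm_nonneg[OF minkowski, of v] by (simp add: power_less_one_iff abs_square_less_1)
qed

lemma unit_ball_subset_ellipsoid:
  assumes "z \<noteq> 0"
  shows "unit_ball \<subseteq> ellipsoid (fund_tensor f z) L"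
proof
  fix v assume "v \<in> unit_ball"
  then have "(f v)\<^sup>2 < 1"
    using minkowski_norm_nonneg[OF minkowski, of v] by (simp add: abs_square_less_1)
  then have "L * (f v)\<^sup>2 < L" using one_le_L by simp
  then show "v \<in> ellipsoid (fund_tensor f z) L"
    using fund_form_le_norm_sq[OF assms, of v] by (simp add: ellipsoid_def)
qed

lemma ellipsoid_subset_ellipsoid:
  assumes "y \<noteq> 0" and "z \<noteq> 0"
  shows "ellipsoid (fund_tensor f y) 1 \<subseteq> ellipsoid (fund_tensor f z) L"
proof
  fix v assume "v \<in> ellipsoid (fund_tensor f y) 1"
  then have "L * (v \<bullet> (fund_tensor f y *v v)) < L"
    using one_le_L by (simp add: ellipsoid_def)
  then show "v \<in> ellipsoid (fund_tensor f z) L"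
    using fund_form_le[OF assms(2,1), of v] by (simp add: ellipsoid_def)
qed

lemma measure_fund_ellipsoid:
  assumes "z \<noteq> 0" and "c > 0"
  shows "measure lborel (ellipsoid (fund_tensor f z) c)
      = measure lborel (ball (0::real^'n) 1) * sqrt c ^ CARD('n) / sqrt (det (fund_tensor f z))"
  using measure_ellipsoid[OF posdef_fund_tensor[OF minkowski assms(1)] assms(2)] .

lemma
  shows fmeasurable_unit_ball: "unit_ball \<in> fmeasurable lborel"
    and bounded_unit_ball: "bounded unit_ball"
proof -
  have z: "axis undefined 1 \<noteq> (0::real^'n)" by (simp add: axis_eq_0_iff)
  have L: "L > 0" using one_le_L by simp
  have fm: "ellipsoid (fund_tensor f (axis undefined 1)) L \<in> fmeasurable lborel"
    using fmeasurable_ellipsoid[OF posdef_fund_tensor[OF minkowski z] L] .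
  have "emeasure lborel unit_ball \<le> emeasure lborel (ellipsoid (fund_tensor f (axis undefined 1)) L)"
    using fm by (intro emeasure_mono unit_ball_subset_ellipsoid[OF z]) (simp add: fmeasurable_def)
  also have "\<dots> < \<infinity>"
    using fm by (simp add: fmeasurable_def)
  finally show "unit_ball \<in> fmeasurable lborel"
    using sets_minkowski_unit_ball[OF minkowski] by (simp add: fmeasurable_def)
  show "bounded unit_ball"
    using unit_ball_subset_ellipsoid[OF z] bounded_ellipsoid[OF posdef_fund_tensor[OF minkowski z] L]
    by (rule bounded_subset[rotated])
qed

lemma measure_unit_ball_ge:
  assumes "y \<noteq> 0"
  shows "measure lborel (ball (0::real^'n) 1) * sqrt (1 / L) ^ CARD('n) / sqrt (det (fund_tensor f y)) \<le> measure lborel unit_ball"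
proof -
  have "1 / L > 0" using one_le_L by simp
  then have "ellipsoid (fund_tensor f y) (1 / L) \<in> fmeasurable lborel"
    by (rule fmeasurable_ellipsoid[OF posdef_fund_tensor[OF minkowski assms]])
  then have "measure lborel (ellipsoid (fund_tensor f y) (1 / L)) \<le> measure lborel unit_ball"
    using fmeasurable_unit_ball
    by (intro measure_mono_fmeasurable ellipsoid_subset_unit_ball[OF assms]) (auto dest: fmeasurableD)
  with \<open>1 / L > 0\<close> show ?thesis
    by (simp add: measure_fund_ellipsoid[OF assms])
qed

lemma measure_unit_ball_pos: "measure lborel unit_ball > 0"
proof -
  have y: "axis undefined 1 \<noteq> (0::real^'n)" by (simp add: axis_eq_0_iff)
  have "0 < measure lborel (ball (0::real^'n) 1) * sqrt (1 / L) ^ CARD('n)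
      / sqrt (det (fund_tensor f (axis undefined 1)))"
    using one_le_L det_pos_if_posdef[OF posdef_fund_tensor[OF minkowski y]] by (simp add: content_ball_pos)
  with measure_unit_ball_ge[OF y] show ?thesis by linarith
qed

lemma busemann_hausdorff_density_le:
  assumes "y \<noteq> 0"
  shows "measure lborel (ball (0::real^'n) 1) / measure lborel unit_ball
      \<le> sqrt (det (fund_tensor f y)) * L ^ CARD('n)"
proof -
  define \<omega> where "\<omega> = measure lborel (ball (0::real^'n) 1)"
  define d where "d = sqrt (det (fund_tensor f y))"
  have \<omega>: "\<omega> > 0" unfolding \<omega>_def by (rule content_ball_pos) simp
  have d: "d > 0"
    using det_pos_if_posdef[OF posdef_fund_tensor[OF minkowski assms]] by (simp add: d_def)
  have L: "L > 0" using one_le_L by simp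
  have lower: "\<omega> * sqrt (1 / L) ^ CARD('n) / d > 0"
    using \<omega> d L by simp
  have "0 < measure lborel unit_ball * (\<omega> * sqrt (1 / L) ^ CARD('n) / d)"
    using measure_unit_ball_pos lower by (rule mult_pos_pos)
  then have "\<omega> / measure lborel unit_ball \<le> \<omega> / (\<omega> * sqrt (1 / L) ^ CARD('n) / d)"
    using measure_unit_ball_ge[OF assms] \<omega>
    by (intro divide_left_mono) (simp_all add: \<omega>_def d_def)
  also have "\<dots> = d * sqrt L ^ CARD('n)"
    using \<omega> d L by (simp add: real_sqrt_divide power_divide field_simps)
  also have "\<dots> \<le> d * L ^ CARD('n)"
  proof -
    have "sqrt L * 1 \<le> sqrt L * sqrt L"
      using one_le_L by (intro mult_left_mono) auto
    then have "sqrt L \<le> L" using L by simp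
    then show ?thesis
      using d L by (intro mult_left_mono power_mono) auto
  qed
  finally show ?thesis by (simp add: \<omega>_def d_def)
qed

text \<open>The inclusions \<open>{F < 1} \<subseteq> {g\<^sub>z < L}\<close> and \<open>{g\<^sub>y < 1} \<subseteq> {g\<^sub>z < L}\<close> each bound
  one of the two factors \<open>\<surd>det g\<^sub>z\<close> of the left-hand side.\<close>

lemma det_fund_tensor_mult_measure_le:
  assumes "y \<noteq> 0" and "z \<noteq> 0"
  shows "det (fund_tensor f z) * measure lborel unit_ball
      \<le> measure lborel (ball (0::real^'n) 1) * L ^ CARD('n) * sqrt (det (fund_tensor f y))"
proof -
  define \<omega> where "\<omega> = measure lborel (ball (0::real^'n) 1)"
  define s where "s = sqrt L ^ CARD('n)"
  define dy where "dy = sqrt (det (fund_tensor f y))"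
  define dz where "dz = sqrt (det (fund_tensor f z))"
  have \<omega>: "\<omega> > 0" unfolding \<omega>_def by (rule content_ball_pos) simp
  have dy: "dy > 0" and dz: "dz > 0"
    using det_pos_if_posdef[OF posdef_fund_tensor[OF minkowski]] assms by (simp_all add: dy_def dz_def)
  have L: "L > 0" using one_le_L by simp
  have s: "s > 0" "s * s = L ^ CARD('n)"
    using L by (simp_all add: s_def flip: power_mult_distrib)
  have fm_z: "ellipsoid (fund_tensor f z) L \<in> fmeasurable lborel"
    by (rule fmeasurable_ellipsoid[OF posdef_fund_tensor[OF minkowski assms(2)] L])
  have "measure lborel unit_ball \<le> measure lborel (ellipsoid (fund_tensor f z) L)"
    using fm_z fmeasurable_unit_ball
    by (intro measure_mono_fmeasurable unit_ball_subset_ellipsoid[OF assms(2)]) (auto dest: fmeasurableD)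
  then have vol: "dz * measure lborel unit_ball \<le> \<omega> * s"
    using dz by (simp add: measure_fund_ellipsoid[OF assms(2) L] \<omega>_def s_def dz_def field_simps)
  have "measure lborel (ellipsoid (fund_tensor f y) 1) \<le> measure lborel (ellipsoid (fund_tensor f z) L)"
    using fm_z fmeasurable_ellipsoid[OF posdef_fund_tensor[OF minkowski assms(1)] zero_less_one]
    by (intro measure_mono_fmeasurable ellipsoid_subset_ellipsoid[OF assms]) (auto dest: fmeasurableD)
  then have "\<omega> / dy \<le> \<omega> * s / dz"
    by (simp add: measure_fund_ellipsoid[OF assms(1)] measure_fund_ellipsoid[OF assms(2) L]
        \<omega>_def s_def dy_def dz_def)
  then have det: "dz \<le> s * dy"
    using \<omega> dy dz by (simp add: field_simps)
  have "det (fund_tensor f z) * measure lborel unit_ball = dz * (dz * measure lborel unit_ball)"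
    using dz by (simp add: dz_def)
  also have "\<dots> \<le> (s * dy) * (\<omega> * s)"
    using dz s(1) dy measure_unit_ball_pos by (intro mult_mono[OF det vol]) auto
  also have "\<dots> = \<omega> * L ^ CARD('n) * dy"
    using s(2) by (simp add: mult_ac)
  finally show ?thesis by (simp add: \<omega>_def dy_def)
qed

lemma integral_det_fund_tensor_le:
  assumes "y \<noteq> 0"
  shows "0 \<le> integral unit_ball (\<lambda>z. det (fund_tensor f z))"
    and "integral unit_ball (\<lambda>z. det (fund_tensor f z))
      \<le> measure lborel (ball (0::real^'n) 1) * L ^ CARD('n) * sqrt (det (fund_tensor f y))"
proof -
  define C where "C = measure lborel (ball (0::real^'n) 1) * L ^ CARD('n) * sqrt (det (fund_tensor f y))"
  define V where "V = measure lborel unit_ball"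
  define g where "g z = (if z = 0 then 0 else det (fund_tensor f z))" for z
  have C: "C > 0"
    using one_le_L det_pos_if_posdef[OF posdef_fund_tensor[OF minkowski assms]]
    by (simp add: C_def content_ball_pos)
  have V: "V > 0"
    using measure_unit_ball_pos by (simp add: V_def)
  have g_nonneg: "0 \<le> g z" for z
    using det_pos_if_posdef[OF posdef_fund_tensor[OF minkowski]] by (simp add: g_def less_imp_le)
  have g_le: "g z \<le> C / V" for z
    using det_fund_tensor_mult_measure_le[OF assms, of z] C V
    by (simp add: g_def C_def V_def field_simps less_imp_le)
  have "unit_ball \<in> sets lebesgue"
    using sets_minkowski_unit_ball[OF minkowski] sets_completionI_sets[of unit_ball lborel] by simp
  then have lmeas: "unit_ball \<in> lmeasurable"
    using bounded_unit_ball by (intro bounded_set_imp_lmeasurable)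
  have "integral unit_ball (\<lambda>z. det (fund_tensor f z)) = integral unit_ball g"
    by (rule integral_spike[of "{0}"]) (auto simp: g_def)
  moreover have "0 \<le> integral unit_ball g \<and> integral unit_ball g \<le> C"
  proof (cases "g integrable_on unit_ball")
    case True
    have "integral unit_ball g \<le> integral unit_ball (\<lambda>z. C / V)"
      using True integrable_on_const[OF lmeas] g_le by (intro integral_le) auto
    also have "\<dots> = C / V * integral unit_ball (\<lambda>z. 1)"
      using integral_mult_right[of unit_ball "C / V" "\<lambda>z. 1"] by simp
    also have "\<dots> = C / V * V"
      using lmeasure_integral[OF lmeas] sets_minkowski_unit_ball[OF minkowski] by (simp add: V_def)
    finally show ?thesis
      using V integral_nonneg[OF True g_nonneg] by simp
  next
    case False
    then show ?thesis using C by (simp add: not_integrable_integral)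
  qed
  ultimately show "0 \<le> integral unit_ball (\<lambda>z. det (fund_tensor f z))"
    and "integral unit_ball (\<lambda>z. det (fund_tensor f z)) \<le> C"
    by simp_all
qed

end

section \<open>The distortion of the Busemann--Hausdorff and Holmes--Thompson volume forms\<close>

lemma uniform_minkowski_norm_uniform_constant:
  fixes F :: "'p \<Rightarrow> real^'n \<Rightarrow> real"
  assumes finsler: "finsler F" and bdd: "bdd_above (uniform_ratios F)"
  shows "uniform_minkowski_norm (F x) (uniform_constant F)"
proof
  let ?f = "F x" and ?\<Lambda> = "uniform_constant F"
  let ?q = "\<lambda>z v. v \<bullet> (fund_tensor ?f z *v v)"
  show minkowski: "minkowski_norm ?f"
    using finsler by (simp add: finsler_def)
  fix z w v :: "real^'n"
  assume "z \<noteq> 0" "w \<noteq> 0"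
  show "?q z v \<le> ?\<Lambda> * ?q w v"
  proof (cases "v = 0")
    case True
    then show ?thesis by simp
  next
    case False
    define c where "c = 1 / ?f v"
    have c: "c > 0" using minkowski_norm_pos[OF minkowski False] by (simp add: c_def)
    have qw: "?q w v > 0"
      using posdef_fund_tensor[OF minkowski \<open>w \<noteq> 0\<close>] False by (simp add: posdef_def)
    have "?q ((1 / ?f z) *\<^sub>R z) (c *\<^sub>R v) / ?q ((1 / ?f w) *\<^sub>R w) (c *\<^sub>R v) \<in> uniform_ratios F"
      unfolding uniform_ratios_def c_def
      using minkowski_norm_normalize[OF minkowski] False \<open>z \<noteq> 0\<close> \<open>w \<noteq> 0\<close> by blast
    then have "?q ((1 / ?f z) *\<^sub>R z) (c *\<^sub>R v) / ?q ((1 / ?f w) *\<^sub>R w) (c *\<^sub>R v) \<le> ?\<Lambda>"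
      unfolding uniform_constant_def using bdd by (rule cSup_upper)
    then have "?q z v / ?q w v \<le> ?\<Lambda>"
      unfolding quadratic_form_scaleR fund_tensor_normalize[OF minkowski \<open>z \<noteq> 0\<close>]
        fund_tensor_normalize[OF minkowski \<open>w \<noteq> 0\<close>]
      using c by simp
    then show ?thesis
      using qw by (simp add: divide_le_eq)
  qed
qed

lemma exp_neg_ln_div_le:
  fixes a s L :: real
  assumes "a > 0" and "\<bar>s\<bar> \<le> a * L" and "1 \<le> L"
  shows "exp (- ln (a / s)) \<le> L"
proof (cases "s = 0")
  case True
  then show ?thesis using assms(3) by simp
next
  case False
  then have "exp (- ln (a / s)) = \<bar>s\<bar> / a"
    using assms(1) by (simp add: exp_minus exp_ln_abs abs_divide)
  also have "\<dots> \<le> L"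
    using assms(1,2) by (simp add: divide_le_eq mult.commute)
  finally show ?thesis .
qed

context
  fixes F :: "'p \<Rightarrow> real^'n \<Rightarrow> real"
  assumes finsler: "finsler F" and bdd: "bdd_above (uniform_ratios F)"
begin

interpretation uniform_minkowski_norm "F x" "uniform_constant F" for x
  by (rule uniform_minkowski_norm_uniform_constant[OF finsler bdd])

lemma abs_sigma_BH_le:
  assumes "y \<noteq> 0"
  shows "\<bar>sigma_BH F x\<bar> \<le> sqrt (det (fund_tensor (F x) y)) * uniform_constant F ^ CARD('n)"
proof -
  have "0 \<le> sigma_BH F x"
    using measure_unit_ball_pos by (simp add: sigma_BH_def)
  with busemann_hausdorff_density_le[OF assms] show ?thesis
    by (simp add: sigma_BH_def)
qed

lemma abs_sigma_HT_le:
  assumes "y \<noteq> 0"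
  shows "\<bar>sigma_HT F x\<bar> \<le> sqrt (det (fund_tensor (F x) y)) * uniform_constant F ^ CARD('n)"
proof -
  have "measure lborel (ball (0::real^'n) 1) > 0" by (rule content_ball_pos) simp
  with integral_det_fund_tensor_le[OF assms] show ?thesis
    by (simp add: sigma_HT_def divide_le_eq mult_ac)
qed

end

theorem proposition8p1:
  fixes F :: "'p \<Rightarrow> real^'m \<Rightarrow> real" and \<sigma> :: "'p \<Rightarrow> real"
    and x :: 'p and y :: "real^'m"
  assumes "finsler F"
    and "bdd_above (uniform_ratios F)"
    and "\<sigma> = sigma_BH F \<or> \<sigma> = sigma_HT F"
    and "F x y = 1"
  shows "exp (- distortion \<sigma> F x y) \<le> uniform_constant F ^ CARD('m)"
proof -
  interpret uniform_minkowski_norm "F x" "uniform_constant F"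
    using uniform_minkowski_norm_uniform_constant[OF assms(1,2)] .
  have "y \<noteq> 0"
    using assms(4) minkowski_norm_zero[OF minkowski] by auto
  have "\<bar>\<sigma> x\<bar> \<le> sqrt (det (fund_tensor (F x) y)) * uniform_constant F ^ CARD('m)"
    using assms(3) abs_sigma_BH_le[OF assms(1,2) \<open>y \<noteq> 0\<close>] abs_sigma_HT_le[OF assms(1,2) \<open>y \<noteq> 0\<close>]
    by auto
  moreover have "sqrt (det (fund_tensor (F x) y)) > 0"
    using det_pos_if_posdef[OF posdef_fund_tensor[OF minkowski \<open>y \<noteq> 0\<close>]] by simp
  moreover have "1 \<le> uniform_constant F ^ CARD('m)"
    using one_le_L by simp
  ultimately show ?thesis
    unfolding distortion_def by (intro exp_neg_ln_div_le)
qed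

end
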